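(* For every $r\geq 4$ there is an antipodal partial cube of rank $r$ and minimum degree $4$. Moreover, there is an antipodal partial cube of rank $4$ and minimum degree $3$.
   Context: Hypercube $Q_n$: vertex set $\{+,-\}^n$, adjacency = differing in one coordinate. A partial cube is an isometric subgraph $G$ of $Q_n$, with $n$ minimal (isometric dimension); its edges split into $\Theta$-classes $E_f$ (edges flipping coordinate $f$). $G$ is antipodal if for every vertex $v$ of $G$ the vertex of $Q_n$ with all coordinates of $v$ flipped also belongs to $G$. The contraction $\pi_f(G)$ is obtained by contracting all edges of $E_f$; the rank of $G$ is the largest $r$ such that $Q_r$ can be obtained from $G$ by a sequence of contractions. *)

theory Defs
  imports Main
begin

text \<open>Vertices of the hypercube Q_n are sign vectors in {+,-}^n, encoded as subsets
  of {0..<n} (the set of coordinates carrying +). A graph is a pair (V, E) of a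
  vertex set and an adjacency relation.\<close>

type_synonym graph = "nat set set \<times> (nat set \<Rightarrow> nat set \<Rightarrow> bool)"

definition hamming :: "nat set \<Rightarrow> nat set \<Rightarrow> nat" where
  "hamming u v = card ((u - v) \<union> (v - u))"

definition qadj :: "nat set \<Rightarrow> nat set \<Rightarrow> bool" where
  "qadj u v \<longleftrightarrow> hamming u v = 1"

definition qedge :: "nat set set \<Rightarrow> nat set \<Rightarrow> nat set \<Rightarrow> bool" where
  "qedge V u v \<longleftrightarrow> u \<in> V \<and> v \<in> V \<and> qadj u v"

definition is_walk :: "('a \<Rightarrow> 'a \<Rightarrow> bool) \<Rightarrow> 'a list \<Rightarrow> bool" where
  "is_walk E xs \<longleftrightarrow> xs \<noteq> [] \<and> (\<forall>i. Suc i < length xs \<longrightarrow> E (xs ! i) (xs ! Suc i))"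

definition has_dist :: "('a \<Rightarrow> 'a \<Rightarrow> bool) \<Rightarrow> 'a \<Rightarrow> 'a \<Rightarrow> nat \<Rightarrow> bool" where
  "has_dist E u v k \<longleftrightarrow>
     (\<exists>xs. is_walk E xs \<and> hd xs = u \<and> last xs = v \<and> length xs = Suc k) \<and>
     (\<forall>xs. is_walk E xs \<and> hd xs = u \<and> last xs = v \<longrightarrow> Suc k \<le> length xs)"

definition isometric_in_cube :: "nat \<Rightarrow> nat set set \<Rightarrow> bool" where
  "isometric_in_cube n V \<longleftrightarrow> V \<subseteq> Pow {0..<n} \<and>
     (\<forall>u\<in>V. \<forall>v\<in>V. has_dist (qedge V) u v (hamming u v))"

definition partial_cube :: "nat \<Rightarrow> nat set set \<Rightarrow> bool" where
  "partial_cube n V \<longleftrightarrow> V \<noteq> {} \<and> isometric_in_cube n V \<and>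
     \<not> (\<exists>m<n. \<exists>\<phi>. \<phi> ` V \<subseteq> Pow {0..<m} \<and>
            (\<forall>u\<in>V. \<forall>v\<in>V. has_dist (qedge V) u v (hamming (\<phi> u) (\<phi> v))))"

definition antipodal :: "nat \<Rightarrow> nat set set \<Rightarrow> bool" where
  "antipodal n V \<longleftrightarrow> (\<forall>v\<in>V. {0..<n} - v \<in> V)"

text \<open>Contraction of the Theta-class E_f (edges flipping coordinate f): the vertices
  joined by an edge of E_f are identified; a merged class is labelled by the sign
  vector with coordinate f removed (set to -).\<close>
definition contract :: "nat \<Rightarrow> graph \<Rightarrow> graph" where
  "contract f G = ((\<lambda>v. v - {f}) ` fst G,
     (\<lambda>x y. x \<noteq> y \<and> (\<exists>u\<in>fst G. \<exists>v\<in>fst G. snd G u v \<and> u - {f} = x \<and> v - {f} = y)))"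

definition contract_seq :: "nat list \<Rightarrow> graph \<Rightarrow> graph" where
  "contract_seq fs G = fold contract fs G"

definition iso_to_cube :: "graph \<Rightarrow> nat \<Rightarrow> bool" where
  "iso_to_cube G r \<longleftrightarrow> (\<exists>\<phi>. bij_betw \<phi> (fst G) (Pow {0..<r}) \<and>
     (\<forall>x\<in>fst G. \<forall>y\<in>fst G. snd G x y \<longleftrightarrow> qadj (\<phi> x) (\<phi> y)))"

definition pc_graph :: "nat set set \<Rightarrow> graph" where
  "pc_graph V = (V, qedge V)"

definition pc_rank :: "nat \<Rightarrow> nat set set \<Rightarrow> nat" where
  "pc_rank n V = (GREATEST r. \<exists>fs. set fs \<subseteq> {0..<n} \<and> iso_to_cube (contract_seq fs (pc_graph V)) r)"

definition min_degree :: "graph \<Rightarrow> nat" where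
  "min_degree G = Min ((\<lambda>v. card {u\<in>fst G. snd G v u}) ` fst G)"

end

theory Submission
  imports Defs
begin

text \<open>
  Take \<open>A \<subseteq> {0..<n}\<close> with \<open>3 \<le> card A < n\<close> and keep, besides the two poles \<open>{}\<close> and
  \<open>{0..<n}\<close>, exactly the vertices of \<open>Q\<^sub>n\<close> that are not constant on \<open>A\<close>. This set is closed
  under complementation. A flip can only take a non-polar vertex out of the set by making it
  constant on \<open>A\<close>, and as \<open>card A \<ge> 3\<close> at most one of the \<open>n\<close> flips does so; hence every
  vertex has a neighbour one step closer to any other vertex, the set is isometric, and the
  antipodal poles force isometric dimension \<open>n\<close>. Contracting a coordinate of \<open>A\<close> yields
  all of \<open>Q\<^sub>n\<^sub>-\<^sub>1\<close>, since every vertex and edge lifts, while fewer than \<open>2\<^sup>n\<close> vertices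
  rule out rank \<open>n\<close>. The poles have degree \<open>card A\<close>, every other vertex degree at least
  \<open>n - 1\<close>. Now take \<open>n = r + 1\<close> with \<open>card A = 4\<close>, and \<open>n = 5\<close> with \<open>card A = 3\<close>.
\<close>

definition flip :: "nat set \<Rightarrow> nat \<Rightarrow> nat set" where
  "flip u i = (if i \<in> u then u - {i} else insert i u)"

lemma sym_diff_flip: "sym_diff u (flip u i) = {i}"
  by (auto simp: flip_def)

lemma flip_neq: "flip u i \<noteq> u"
  by (auto simp: flip_def)

lemma flip_Diff_singleton: "flip u i - {j} = (if i = j then u - {j} else flip (u - {j}) i)"
  by (auto simp: flip_def)

lemma insert_flip: "i \<noteq> j \<Longrightarrow> insert j (flip u i) = flip (insert j u) i"
  by (auto simp: flip_def)

lemma hamming_flip: "hamming u (flip u i) = 1"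
  unfolding hamming_def sym_diff_flip by simp

lemma flip_inj: "inj (flip u)"
  by (rule injI) (metis sym_diff_flip singleton_inject)

lemma flip_if_sym_diff_eq: "sym_diff u v = {i} \<Longrightarrow> v = flip u i"
  unfolding flip_def set_eq_iff by (metis DiffE DiffI UnCI UnE insert_iff singletonD singletonI)

lemma qadj_iff_flip: "qadj u v \<longleftrightarrow> (\<exists>i. v = flip u i)"
proof
  assume "qadj u v"
  then obtain i where "sym_diff u v = {i}"
    unfolding qadj_def hamming_def by (auto simp: card_1_singleton_iff)
  then have "v = flip u i"
    by (rule flip_if_sym_diff_eq)
  then show "\<exists>i. v = flip u i" ..
qed (auto simp: qadj_def hamming_flip)

lemma hamming_flip_toward:
  assumes "finite u" "finite v" "i \<in> sym_diff u v"
  shows "hamming (flip u i) v + 1 = hamming u v"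
proof -
  have "sym_diff (flip u i) v = sym_diff u v - {i}"
    using assms(3) by (auto simp: flip_def)
  moreover have "card (sym_diff u v) > 0"
    using assms by (auto simp: card_gt_0_iff)
  ultimately show ?thesis
    using assms by (simp add: hamming_def card_Diff_singleton)
qed

lemma hamming_triangle:
  assumes "finite a" "finite b" "finite c"
  shows "hamming a c \<le> hamming a b + hamming b c"
proof -
  have "card (sym_diff a c) \<le> card (sym_diff a b \<union> sym_diff b c)"
    using assms by (intro card_mono) auto
  also have "\<dots> \<le> card (sym_diff a b) + card (sym_diff b c)"
    by (rule card_Un_le)
  finally show ?thesis unfolding hamming_def .
qed

lemma hamming_eq_0D: "finite a \<Longrightarrow> finite b \<Longrightarrow> hamming a b = 0 \<Longrightarrow> a = b"
  unfolding hamming_def by auto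

lemma hamming_le_dim: "a \<subseteq> {0..<n} \<Longrightarrow> b \<subseteq> {0..<n} \<Longrightarrow> hamming a b \<le> n"
proof -
  assume "a \<subseteq> {0..<n}" "b \<subseteq> {0..<n}"
  then have "card (sym_diff a b) \<le> card {0..<n}"
    by (intro card_mono) auto
  then show ?thesis by (simp add: hamming_def)
qed

lemma is_walk_Cons_Cons: "is_walk E (x # y # xs) \<longleftrightarrow> E x y \<and> is_walk E (y # xs)"
  unfolding is_walk_def by (auto simp: nth_Cons split: nat.splits)

lemma walk_hamming_less_length:
  assumes fin: "\<forall>x\<in>V. finite x"
  shows "is_walk (qedge V) xs \<Longrightarrow> hd xs \<in> V \<Longrightarrow>
    last xs \<in> V \<and> hamming (hd xs) (last xs) < length xs"
proof (induction xs)
  case Nil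
  then show ?case by (simp add: is_walk_def)
next
  case (Cons x xs)
  show ?case
  proof (cases xs)
    case Nil
    then show ?thesis using Cons.prems by (simp add: hamming_def)
  next
    case (Cons y ys)
    then have "qedge V x y" and walk: "is_walk (qedge V) xs"
      using Cons.prems(1) by (auto simp: is_walk_Cons_Cons)
    then have V: "x \<in> V" "y \<in> V" and "hamming x y = 1"
      by (auto simp: qedge_def qadj_def)
    moreover have IH: "last xs \<in> V \<and> hamming y (last xs) < length xs"
      using Cons.IH walk V Cons by simp
    moreover have "hamming x (last xs) \<le> hamming x y + hamming y (last xs)"
      using fin V IH by (intro hamming_triangle) auto
    ultimately show ?thesis using Cons by simp
  qed
qed

lemma exists_walk_of_hamming_length:
  assumes fin: "\<forall>x\<in>V. finite x"
    and toward: "\<And>u v. u \<in> V \<Longrightarrow> v \<in> V \<Longrightarrow> u \<noteq> v \<Longrightarrow>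
      \<exists>i \<in> sym_diff u v. flip u i \<in> V"
  shows "u \<in> V \<Longrightarrow> v \<in> V \<Longrightarrow> hamming u v = d \<Longrightarrow>
    \<exists>xs. is_walk (qedge V) xs \<and> hd xs = u \<and> last xs = v \<and> length xs = Suc d"
proof (induction d arbitrary: u)
  case 0
  then have "u = v" using fin hamming_eq_0D by blast
  then show ?case by (intro exI[of _ "[u]"]) (simp add: is_walk_def)
next
  case (Suc d)
  then have "u \<noteq> v" by (auto simp: hamming_def)
  then obtain i where i: "i \<in> sym_diff u v" "flip u i \<in> V"
    using toward Suc.prems by blast
  then have "hamming (flip u i) v = d"
    using hamming_flip_toward[of u v i] fin Suc.prems by simp
  then obtain xs where xs: "is_walk (qedge V) xs" "hd xs = flip u i" "last xs = v" "length xs = Suc d"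
    using Suc.IH i Suc.prems by blast
  then obtain ys where ys: "xs = flip u i # ys" by (cases xs) auto
  have "is_walk (qedge V) (u # xs)"
    using xs ys Suc.prems i hamming_flip by (simp add: is_walk_Cons_Cons qedge_def qadj_def)
  then show ?case using xs ys by (intro exI[of _ "u # xs"]) auto
qed

lemma isometric_in_cube_if_flip_toward:
  assumes sub: "V \<subseteq> Pow {0..<n}"
    and toward: "\<And>u v. u \<in> V \<Longrightarrow> v \<in> V \<Longrightarrow> u \<noteq> v \<Longrightarrow>
      \<exists>i \<in> sym_diff u v. flip u i \<in> V"
  shows "isometric_in_cube n V"
  unfolding isometric_in_cube_def has_dist_def
proof (intro conjI sub ballI allI impI)
  have fin: "\<forall>x\<in>V. finite x" using sub by (auto intro: finite_subset)
  fix u v assume "u \<in> V" "v \<in> V"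
  then show "\<exists>xs. is_walk (qedge V) xs \<and> hd xs = u \<and> last xs = v \<and> length xs = Suc (hamming u v)"
    using exists_walk_of_hamming_length[OF fin toward] by blast
  fix xs assume "is_walk (qedge V) xs \<and> hd xs = u \<and> last xs = v"
  then show "Suc (hamming u v) \<le> length xs"
    using walk_hamming_less_length[OF fin] \<open>u \<in> V\<close> by fastforce
qed

lemma has_dist_unique: "has_dist E u v k \<Longrightarrow> has_dist E u v k' \<Longrightarrow> k = k'"
  unfolding has_dist_def by (metis Suc_le_mono le_antisym)

lemma partial_cube_if_diametral_pair:
  assumes iso: "isometric_in_cube n V" and uv: "u \<in> V" "v \<in> V" "hamming u v = n"
  shows "partial_cube n V"
  unfolding partial_cube_def
proof (intro conjI)
  show "V \<noteq> {}" "isometric_in_cube n V" using uv iso by auto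
  show "\<not> (\<exists>m<n. \<exists>\<phi>. \<phi> ` V \<subseteq> Pow {0..<m} \<and>
    (\<forall>u\<in>V. \<forall>v\<in>V. has_dist (qedge V) u v (hamming (\<phi> u) (\<phi> v))))"
  proof
    assume "\<exists>m<n. \<exists>\<phi>. \<phi> ` V \<subseteq> Pow {0..<m} \<and>
      (\<forall>u\<in>V. \<forall>v\<in>V. has_dist (qedge V) u v (hamming (\<phi> u) (\<phi> v)))"
    then obtain m \<phi> where "m < n" "\<phi> ` V \<subseteq> Pow {0..<m}"
      and "has_dist (qedge V) u v (hamming (\<phi> u) (\<phi> v))"
      using uv by blast
    moreover have "has_dist (qedge V) u v n"
      using iso uv unfolding isometric_in_cube_def by metis
    moreover have "hamming (\<phi> u) (\<phi> v) \<le> m"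
      using \<open>\<phi> ` V \<subseteq> Pow {0..<m}\<close> uv by (intro hamming_le_dim) auto
    ultimately show False using has_dist_unique by fastforce
  qed
qed

lemma card_neighbours:
  assumes "V \<subseteq> Pow {0..<n}" "v \<in> V"
  shows "card {u \<in> V. qedge V v u} = card {i \<in> {0..<n}. flip v i \<in> V}"
proof -
  have "{u \<in> V. qedge V v u} = flip v ` {i \<in> {0..<n}. flip v i \<in> V}"
  proof (intro equalityI subsetI)
    fix u assume "u \<in> {u \<in> V. qedge V v u}"
    then obtain i where "u \<in> V" "u = flip v i"
      by (auto simp: qedge_def qadj_iff_flip)
    moreover have "i \<in> {0..<n}"
      using sym_diff_flip[of v i] assms calculation by blast
    ultimately show "u \<in> flip v ` {i \<in> {0..<n}. flip v i \<in> V}" by blast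
  next
    fix u assume "u \<in> flip v ` {i \<in> {0..<n}. flip v i \<in> V}"
    then show "u \<in> {u \<in> V. qedge V v u}"
      using assms(2) hamming_flip by (auto simp: qedge_def qadj_def)
  qed
  then show ?thesis
    by (simp add: card_image inj_on_subset[OF flip_inj])
qed

lemma min_degree_pc_graph:
  assumes "V \<subseteq> Pow {0..<n}"
  shows "min_degree (pc_graph V) = Min ((\<lambda>v. card {i \<in> {0..<n}. flip v i \<in> V}) ` V)"
  unfolding min_degree_def pc_graph_def fst_conv snd_conv
  using card_neighbours[OF assms] by (metis (no_types, lifting) image_cong)

lemma finite_card_contract_seq:
  "finite (fst G) \<Longrightarrow> finite (fst (contract_seq fs G)) \<and> card (fst (contract_seq fs G)) \<le> card (fst G)"
proof (induction fs arbitrary: G)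
  case Nil
  then show ?case by (simp add: contract_seq_def)
next
  case (Cons f fs)
  have "contract_seq (f # fs) G = contract_seq fs (contract f G)"
    by (simp add: contract_seq_def)
  moreover have "fst (contract f G) = (\<lambda>v. v - {f}) ` fst G"
    by (simp add: contract_def)
  ultimately show ?case
    using Cons.IH[of "contract f G"] Cons.prems card_image_le[of "fst G" "\<lambda>v. v - {f}"] by auto
qed

lemma card_iso_to_cube: "iso_to_cube G r \<Longrightarrow> card (fst G) = 2 ^ r"
  unfolding iso_to_cube_def by (metis bij_betw_same_card card_Pow card_atLeastLessThan diff_zero finite_atLeastLessThan)

lemma pc_rank_eqI:
  assumes "finite V" "set fs \<subseteq> {0..<n}" "iso_to_cube (contract_seq fs (pc_graph V)) r"
    and "card V < 2 ^ Suc r"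
  shows "pc_rank n V = r"
  unfolding pc_rank_def
proof (rule Greatest_equality)
  show "\<exists>fs. set fs \<subseteq> {0..<n} \<and> iso_to_cube (contract_seq fs (pc_graph V)) r"
    using assms by blast
next
  fix r' assume "\<exists>fs. set fs \<subseteq> {0..<n} \<and> iso_to_cube (contract_seq fs (pc_graph V)) r'"
  then obtain fs' where "iso_to_cube (contract_seq fs' (pc_graph V)) r'" by blast
  then have "2 ^ r' \<le> card V"
    using card_iso_to_cube finite_card_contract_seq[of "pc_graph V" fs'] assms(1)
    by (fastforce simp: pc_graph_def)
  with assms(4) have "(2::nat) ^ r' < 2 ^ Suc r" by linarith
  then show "r' \<le> r"
    using power_less_imp_less_exp[of "2::nat" r' "Suc r"] by simp
qed

lemma iso_to_cube_contract_last:
  assumes sub: "V \<subseteq> Pow {0..<Suc n}"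
    and lift_vertex: "\<And>x. x \<subseteq> {0..<n} \<Longrightarrow> \<exists>u\<in>V. u - {n} = x"
    and lift_edge: "\<And>x y. x \<subseteq> {0..<n} \<Longrightarrow> y \<subseteq> {0..<n} \<Longrightarrow> qadj x y \<Longrightarrow>
      \<exists>u\<in>V. \<exists>v\<in>V. qadj u v \<and> u - {n} = x \<and> v - {n} = y"
  shows "iso_to_cube (contract n (pc_graph V)) n"
proof -
  have vertices: "(\<lambda>v. v - {n}) ` V = Pow {0..<n}"
  proof
    show "(\<lambda>v. v - {n}) ` V \<subseteq> Pow {0..<n}"
    proof (rule image_subsetI)
      fix v assume "v \<in> V"
      then have "v \<subseteq> insert n {0..<n}"
        using sub by (auto simp: atLeast0_lessThan_Suc)
      then show "v - {n} \<in> Pow {0..<n}" by blast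
    qed
    show "Pow {0..<n} \<subseteq> (\<lambda>v. v - {n}) ` V"
      using lift_vertex by blast
  qed
  have edges: "(x \<noteq> y \<and> (\<exists>u\<in>V. \<exists>v\<in>V. qedge V u v \<and> u - {n} = x \<and> v - {n} = y)) \<longleftrightarrow> qadj x y"
    if "x \<subseteq> {0..<n}" "y \<subseteq> {0..<n}" for x y
  proof
    assume "x \<noteq> y \<and> (\<exists>u\<in>V. \<exists>v\<in>V. qedge V u v \<and> u - {n} = x \<and> v - {n} = y)"
    then obtain u i where "x \<noteq> y" "u - {n} = x" "flip u i - {n} = y"
      by (auto simp: qedge_def qadj_iff_flip)
    then have "y = flip x i"
      by (metis flip_Diff_singleton)
    then show "qadj x y" by (auto simp: qadj_iff_flip)
  next
    assume "qadj x y"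
    moreover have "x \<noteq> y"
      using \<open>qadj x y\<close> flip_neq by (auto simp: qadj_iff_flip)
    ultimately show "x \<noteq> y \<and> (\<exists>u\<in>V. \<exists>v\<in>V. qedge V u v \<and> u - {n} = x \<and> v - {n} = y)"
      using lift_edge[OF that] unfolding qedge_def by blast
  qed
  show ?thesis
    unfolding iso_to_cube_def
    by (rule exI[of _ id]) (simp add: contract_def pc_graph_def vertices edges)
qed

definition straddling :: "nat \<Rightarrow> nat set \<Rightarrow> nat set set" where
  "straddling n A = {{}, {0..<n}} \<union> {v. v \<subseteq> {0..<n} \<and> v \<inter> A \<noteq> {} \<and> \<not> A \<subseteq> v}"

locale straddle =
  fixes n :: nat and A :: "nat set"
  assumes A_subset: "A \<subseteq> {0..<n}"
    and card_A: "3 \<le> card A"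
    and A_proper: "A \<noteq> {0..<n}"
begin

lemma mem_straddling_iff:
  "v \<in> straddling n A \<longleftrightarrow> v \<subseteq> {0..<n} \<and> (v = {} \<or> v = {0..<n} \<or> (v \<inter> A \<noteq> {} \<and> \<not> A \<subseteq> v))"
  unfolding straddling_def by auto

lemma straddling_subset: "straddling n A \<subseteq> Pow {0..<n}"
  unfolding straddling_def by auto

lemma A_not_subset_pair: "\<not> A \<subseteq> {i, j}"
proof
  assume "A \<subseteq> {i, j}"
  then have "card A \<le> card {i, j}" by (intro card_mono) auto
  also have "\<dots> \<le> 2" by (simp add: card_insert_if)
  finally show False using card_A by simp
qed

lemma A_not_subset_singleton: "\<not> A \<subseteq> {i}"
  using A_not_subset_pair[of i i] by simp

lemma A_nonempty: "A \<noteq> {}"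
  using card_A by auto

lemma card_A_less: "card A < n"
proof -
  have "card A < card {0..<n}"
    using A_subset A_proper by (intro psubset_card_mono) auto
  then show ?thesis by simp
qed

lemma flip_empty_mem_iff:
  assumes "i \<in> {0..<n}"
  shows "flip {} i \<in> straddling n A \<longleftrightarrow> i \<in> A"
proof -
  have "{i} \<noteq> {0..<n}" using A_subset A_not_subset_singleton by auto
  then have "{i} \<in> straddling n A \<longleftrightarrow> {i} \<inter> A \<noteq> {}"
    using assms A_not_subset_singleton unfolding mem_straddling_iff by blast
  then show ?thesis by (simp add: flip_def)
qed

lemma flip_full_mem_iff:
  assumes "i \<in> {0..<n}"
  shows "flip {0..<n} i \<in> straddling n A \<longleftrightarrow> i \<in> A"
proof -
  have "{0..<n} - {i} \<noteq> {}" "({0..<n} - {i}) \<inter> A \<noteq> {}" "{0..<n} - {i} \<noteq> {0..<n}"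
    using assms A_subset A_not_subset_singleton by auto
  then have "{0..<n} - {i} \<in> straddling n A \<longleftrightarrow> \<not> A \<subseteq> {0..<n} - {i}"
    unfolding mem_straddling_iff by blast
  moreover have "A \<subseteq> {0..<n} - {i} \<longleftrightarrow> i \<notin> A"
    using A_subset by blast
  ultimately show ?thesis
    using assms by (simp add: flip_def)
qed

lemma flip_not_mem:
  assumes v: "v \<subseteq> {0..<n}" "v \<inter> A \<noteq> {}" "\<not> A \<subseteq> v"
    and i: "i \<in> {0..<n}" "flip v i \<notin> straddling n A"
  shows "v \<inter> A = {i} \<or> A - v = {i}"
proof (cases "i \<in> v")
  case True
  then have "v - {i} \<notin> straddling n A"
    using i by (simp add: flip_def)
  moreover have "v - {i} \<subseteq> {0..<n}" "v - {i} \<noteq> {0..<n}" "\<not> A \<subseteq> v - {i}"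
    using v True by auto
  ultimately have "v - {i} = {} \<or> (v - {i}) \<inter> A = {}"
    unfolding mem_straddling_iff by blast
  then have "v \<inter> A \<subseteq> {i}" by blast
  then show ?thesis using v(2) by blast
next
  case False
  then have "insert i v \<notin> straddling n A"
    using i by (simp add: flip_def)
  moreover have "insert i v \<subseteq> {0..<n}" "insert i v \<noteq> {}" "insert i v \<inter> A \<noteq> {}"
    using v i by auto
  ultimately have "insert i v = {0..<n} \<or> A \<subseteq> insert i v"
    unfolding mem_straddling_iff by blast
  then have "A - v \<subseteq> {i}" using A_subset by blast
  then show ?thesis using v(3) by blast
qed

lemma flip_mem_but_one:
  assumes v: "v \<subseteq> {0..<n}" "v \<inter> A \<noteq> {}" "\<not> A \<subseteq> v"
  shows "\<exists>j. \<forall>i\<in>{0..<n}. flip v i \<notin> straddling n A \<longrightarrow> i = j"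
proof (rule ccontr)
  assume "\<not> ?thesis"
  then obtain i j where "i \<noteq> j" "i \<in> {0..<n}" "j \<in> {0..<n}"
    "flip v i \<notin> straddling n A" "flip v j \<notin> straddling n A"
    by blast
  then have "v \<inter> A = {i} \<or> A - v = {i}" "v \<inter> A = {j} \<or> A - v = {j}"
    using flip_not_mem[OF v] by blast+
  with \<open>i \<noteq> j\<close> have "A \<subseteq> {i, j}" by blast
  then show False using A_not_subset_pair by blast
qed

lemma isometric_straddling: "isometric_in_cube n (straddling n A)"
proof (rule isometric_in_cube_if_flip_toward[OF straddling_subset])
  fix u v assume u: "u \<in> straddling n A" and v: "v \<in> straddling n A" and "u \<noteq> v"
  have uN: "u \<subseteq> {0..<n}" and vN: "v \<subseteq> {0..<n}"
    using u v straddling_subset by auto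
  consider "u = {}" | "u = {0..<n}" | "u \<inter> A \<noteq> {}" "\<not> A \<subseteq> u"
    using u mem_straddling_iff by blast
  then show "\<exists>i \<in> sym_diff u v. flip u i \<in> straddling n A"
  proof cases
    case 1
    then have "v \<inter> A \<noteq> {}"
      using v \<open>u \<noteq> v\<close> A_subset A_nonempty unfolding mem_straddling_iff by blast
    then obtain i where "i \<in> v" "i \<in> A" by blast
    then show ?thesis
      using 1 flip_empty_mem_iff A_subset by blast
  next
    case 2
    then have "\<not> A \<subseteq> v"
      using v \<open>u \<noteq> v\<close> A_nonempty unfolding mem_straddling_iff by blast
    then obtain i where "i \<notin> v" "i \<in> A" by blast
    then show ?thesis
      using 2 flip_full_mem_iff A_subset by blast
  next
    case 3
    then obtain j where j: "\<forall>i\<in>{0..<n}. flip u i \<notin> straddling n A \<longrightarrow> i = j"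
      using flip_mem_but_one uN by blast
    show ?thesis
    proof (cases "sym_diff u v \<subseteq> {j}")
      case True
      then have "sym_diff u v = {j}" using \<open>u \<noteq> v\<close> by blast
      then show ?thesis using v flip_if_sym_diff_eq by blast
    next
      case False
      then obtain i where "i \<in> sym_diff u v" "i \<noteq> j" by blast
      then show ?thesis using j uN vN by blast
    qed
  qed
qed

lemma antipodal_straddling: "antipodal n (straddling n A)"
  unfolding antipodal_def
proof
  fix v assume "v \<in> straddling n A"
  then consider "v = {}" | "v = {0..<n}" | "v \<subseteq> {0..<n}" "v \<inter> A \<noteq> {}" "\<not> A \<subseteq> v"
    using mem_straddling_iff by blast
  then show "{0..<n} - v \<in> straddling n A"
  proof cases
    case 3
    then have "({0..<n} - v) \<inter> A \<noteq> {}" "\<not> A \<subseteq> {0..<n} - v"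
      using A_subset by blast+
    then show ?thesis using mem_straddling_iff by blast
  qed (simp_all add: mem_straddling_iff)
qed

lemma partial_cube_straddling: "partial_cube n (straddling n A)"
proof (rule partial_cube_if_diametral_pair[OF isometric_straddling])
  show "{} \<in> straddling n A" "{0..<n} \<in> straddling n A"
    by (simp_all add: mem_straddling_iff)
  show "hamming {} {0..<n} = n"
    by (simp add: hamming_def)
qed

lemma card_straddling_less: "card (straddling n A) < 2 ^ n"
proof -
  obtain i where i: "i \<in> {0..<n}" "i \<notin> A"
    using A_subset A_proper by blast
  have "{i} \<noteq> {0..<n}"
    using A_subset A_not_subset_singleton by auto
  then have "{i} \<notin> straddling n A"
    using i unfolding mem_straddling_iff by blast
  then have "straddling n A \<subset> Pow {0..<n}"
    using straddling_subset i by blast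
  then have "card (straddling n A) < card (Pow {0..<n})"
    by (intro psubset_card_mono) simp_all
  then show ?thesis by (simp add: card_Pow)
qed

lemma card_flip_mem_empty: "card {i \<in> {0..<n}. flip {} i \<in> straddling n A} = card A"
proof -
  have "{i \<in> {0..<n}. flip {} i \<in> straddling n A} = A"
    using flip_empty_mem_iff A_subset by blast
  then show ?thesis by simp
qed

lemma card_A_le_card_flip_mem:
  assumes "v \<in> straddling n A"
  shows "card A \<le> card {i \<in> {0..<n}. flip v i \<in> straddling n A}"
proof -
  consider "v = {}" | "v = {0..<n}" | "v \<subseteq> {0..<n}" "v \<inter> A \<noteq> {}" "\<not> A \<subseteq> v"
    using assms mem_straddling_iff by blast
  then show ?thesis
  proof cases
    case 1
    then show ?thesis using card_flip_mem_empty by simp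
  next
    case 2
    have "{i \<in> {0..<n}. flip {0..<n} i \<in> straddling n A} = A"
      using flip_full_mem_iff A_subset by blast
    then show ?thesis using 2 by simp
  next
    case 3
    then obtain j where "\<forall>i\<in>{0..<n}. flip v i \<notin> straddling n A \<longrightarrow> i = j"
      using flip_mem_but_one by blast
    then have "{0..<n} - {j} \<subseteq> {i \<in> {0..<n}. flip v i \<in> straddling n A}"
      by blast
    then have "card ({0..<n} - {j}) \<le> card {i \<in> {0..<n}. flip v i \<in> straddling n A}"
      by (intro card_mono) auto
    moreover have "n - 1 \<le> card ({0..<n} - {j})"
      by (simp add: card_Diff_singleton_if)
    ultimately show ?thesis using card_A_less by linarith
  qed
qed

lemma min_degree_straddling: "min_degree (pc_graph (straddling n A)) = card A"
  unfolding min_degree_pc_graph[OF straddling_subset]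
proof (rule Min_eqI)
  show "finite ((\<lambda>v. card {i \<in> {0..<n}. flip v i \<in> straddling n A}) ` straddling n A)"
    using straddling_subset finite_subset by (intro finite_imageI) blast
  show "card A \<in> (\<lambda>v. card {i \<in> {0..<n}. flip v i \<in> straddling n A}) ` straddling n A"
    using card_flip_mem_empty by (force simp: mem_straddling_iff)
qed (use card_A_le_card_flip_mem in blast)

lemma lift_vertex_straddling:
  assumes "n = Suc m" "m \<in> A" "x \<subseteq> {0..<m}"
  shows "\<exists>u \<in> straddling n A. u - {m} = x"
proof (cases "A - {m} \<subseteq> x")
  case True
  moreover have "A - {m} \<noteq> {}" using A_not_subset_singleton by blast
  ultimately have "x \<in> straddling n A"
    using assms unfolding mem_straddling_iff by auto
  moreover have "x - {m} = x" using assms(3) by auto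
  ultimately show ?thesis by blast
next
  case False
  then have "insert m x \<in> straddling n A"
    using assms unfolding mem_straddling_iff by auto
  moreover have "insert m x - {m} = x" using assms(3) by auto
  ultimately show ?thesis by blast
qed

lemma lift_edge_straddling:
  assumes "n = Suc m" "m \<in> A" "x \<subseteq> {0..<m}" "y \<subseteq> {0..<m}" "qadj x y"
  shows "\<exists>u \<in> straddling n A. \<exists>v \<in> straddling n A. qadj u v \<and> u - {m} = x \<and> v - {m} = y"
proof -
  obtain i where y: "y = flip x i"
    using assms(5) qadj_iff_flip by blast
  then have "i \<in> sym_diff x y" using sym_diff_flip by blast
  then have "i \<noteq> m" using assms(3,4) by auto
  show ?thesis
  proof (cases "A - {m} \<subseteq> x \<or> A - {m} \<subseteq> y")
    case True
    moreover have "x - {i} = y - {i}" using y by (auto simp: flip_def)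
    ultimately have "A - {m, i} \<subseteq> x" "A - {m, i} \<subseteq> y" by blast+
    moreover have "A - {m, i} \<noteq> {}" using A_not_subset_pair by blast
    ultimately have "x \<in> straddling n A" "y \<in> straddling n A"
      using assms unfolding mem_straddling_iff by auto
    moreover have "x - {m} = x" "y - {m} = y" using assms(3,4) by auto
    ultimately show ?thesis using assms(5) by metis
  next
    case False
    then have "insert m x \<in> straddling n A" "insert m y \<in> straddling n A"
      using assms unfolding mem_straddling_iff by auto
    moreover have "qadj (insert m x) (insert m y)"
      using y \<open>i \<noteq> m\<close> insert_flip qadj_iff_flip by metis
    moreover have "insert m x - {m} = x" "insert m y - {m} = y" using assms(3,4) by auto
    ultimately show ?thesis by metis
  qed
qed

lemma pc_rank_straddling:
  assumes "n = Suc m" "m \<in> A"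
  shows "pc_rank n (straddling n A) = m"
proof (rule pc_rank_eqI)
  show "finite (straddling n A)"
    using straddling_subset finite_subset by blast
  show "set [m] \<subseteq> {0..<n}" using assms by simp
  have "iso_to_cube (contract m (pc_graph (straddling n A))) m"
    using straddling_subset lift_vertex_straddling lift_edge_straddling assms
    by (intro iso_to_cube_contract_last) simp_all
  then show "iso_to_cube (contract_seq [m] (pc_graph (straddling n A))) m"
    by (simp add: contract_seq_def)
  show "card (straddling n A) < 2 ^ Suc m"
    using card_straddling_less assms by simp
qed

end

theorem mainTheorem16:
  shows "(\<forall>r::nat. r \<ge> 4 \<longrightarrow> (\<exists>n V. partial_cube n V \<and> antipodal n V \<and>
            pc_rank n V = r \<and> min_degree (pc_graph V) = 4))
       \<and> (\<exists>n V. partial_cube n V \<and> antipodal n V \<and>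
            pc_rank n V = 4 \<and> min_degree (pc_graph V) = 3)"
proof (intro conjI allI impI)
  fix r :: nat
  assume "r \<ge> 4"
  then interpret straddle "Suc r" "{r - 3..<Suc r}"
    by unfold_locales (simp_all add: atLeastLessThan_eq_iff subset_eq)
  show "\<exists>n V. partial_cube n V \<and> antipodal n V \<and> pc_rank n V = r \<and> min_degree (pc_graph V) = 4"
    using partial_cube_straddling antipodal_straddling pc_rank_straddling min_degree_straddling
      \<open>r \<ge> 4\<close> by (intro exI) auto
next
  interpret straddle 5 "{2..<5}"
    by unfold_locales (simp_all add: atLeastLessThan_eq_iff)
  show "\<exists>n V. partial_cube n V \<and> antipodal n V \<and> pc_rank n V = 4 \<and> min_degree (pc_graph V) = 3"
    using partial_cube_straddling antipodal_straddling pc_rank_straddling[of 4] min_degree_straddling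
    by (intro exI) auto
qed

end
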